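(* Let $G$ be a game all of whose options are numbers, with $L(G)\neq\emptyset$ and $R(G)\neq\emptyset$. Then there are numbers $a,b$ in canonical form such that $G\triangleq\{a\mid b\}$.
   Context: Games are short normal-play combinatorial games, written $G\cong\{L(G)\mid R(G)\}$. A number is a game $G$ with $G^L<G<G^R$ for all $G^L\in L(G)$, $G^R\in R(G)$; every game has a unique simplest representative of its value, its canonical form. Disjunctive sum and negation are the usual ones: $G+H\cong\{L(G)+H,G+L(H)\mid R(G)+H,G+R(H)\}$, $-G\cong\{-R(G)\mid-L(G)\}$. Equivalence modulo domination: $G\triangleq H$ means that in $G+(-H)$, for every move by either player as first player in one summand, the other player has a response in the other summand after which the responder wins. *)

theory Defs
  imports Main "HOL-Library.FSet"
begin

datatype game = Game (lefts: "game fset") (rights: "game fset")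

lemma size_fset_mem_le:
  "x |\<in>| A \<Longrightarrow> size x < (\<Sum>y\<in>fset A. Suc (size y))"
proof -
  assume "x |\<in>| A"
  then have "Suc (size x) \<le> (\<Sum>y\<in>fset A. Suc (size y))"
    by (intro member_le_sum) auto
  then show ?thesis by simp
qed

lemma size_mem_L:
  "x |\<in>| L \<Longrightarrow> size x < Suc ((\<Sum>y\<in>fset L. Suc (size y)) + (\<Sum>y\<in>fset R. Suc (size y)))"
  using size_fset_mem_le[of x L] by linarith

lemma size_mem_R:
  "x |\<in>| R \<Longrightarrow> size x < Suc ((\<Sum>y\<in>fset L. Suc (size y)) + (\<Sum>y\<in>fset R. Suc (size y)))"
  using size_fset_mem_le[of x R] by linarith

lemma size_game_lefts [termination_simp]:
  "x |\<in>| L \<Longrightarrow> size x < size (Game L R)"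
  using size_fset_mem_le[of x L] by simp

lemma size_game_rights [termination_simp]:
  "x |\<in>| R \<Longrightarrow> size x < size (Game L R)"
  using size_fset_mem_le[of x R] by simp

function neg :: "game \<Rightarrow> game" where
  "neg (Game L R) = Game (fimage neg R) (fimage neg L)"
  by pat_completeness auto
termination by (relation "measure size") (simp_all add: size_mem_L size_mem_R)

function plus :: "game \<Rightarrow> game \<Rightarrow> game" where
  "plus (Game L R) (Game L' R') =
     Game ((\<lambda>x. plus x (Game L' R')) |`| L |\<union>| (\<lambda>y. plus (Game L R) y) |`| L')
          ((\<lambda>x. plus x (Game L' R')) |`| R |\<union>| (\<lambda>y. plus (Game L R) y) |`| R')"
  by pat_completeness auto
termination
  by (relation "measure (\<lambda>(G, H). size G + size H)")
     (simp_all add: size_mem_L size_mem_R)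

text \<open>Normal play: \<open>wins True G\<close> means Left wins G moving first,
  \<open>wins False G\<close> means Right wins G moving first.\<close>
function wins :: "bool \<Rightarrow> game \<Rightarrow> bool" where
  "wins True (Game L R) = (\<exists>x\<in>fset L. \<not> wins False x)"
| "wins False (Game L R) = (\<exists>x\<in>fset R. \<not> wins True x)"
  by pat_completeness auto
termination by (relation "measure (size o snd)") (simp_all add: size_mem_L size_mem_R)

text \<open>Order: G \<le> H iff H + (-G) \<ge> 0, i.e. Right loses moving first in H + (-G).\<close>
definition game_le :: "game \<Rightarrow> game \<Rightarrow> bool" where
  "game_le G H \<longleftrightarrow> \<not> wins False (plus H (neg G))"

definition game_lt :: "game \<Rightarrow> game \<Rightarrow> bool" where
  "game_lt G H \<longleftrightarrow> game_le G H \<and> \<not> game_le H G"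

definition is_number :: "game \<Rightarrow> bool" where
  "is_number G \<longleftrightarrow> (\<forall>x. x |\<in>| lefts G \<longrightarrow> game_lt x G)
                   \<and> (\<forall>y. y |\<in>| rights G \<longrightarrow> game_lt G y)"

text \<open>Canonical form: hereditarily no dominated and no reversible options.\<close>
function canonical :: "game \<Rightarrow> bool" where
  "canonical (Game L R) \<longleftrightarrow>
     (\<forall>x. x |\<in>| L \<longrightarrow> canonical x) \<and> (\<forall>x. x |\<in>| R \<longrightarrow> canonical x)
   \<and> (\<forall>x y. x |\<in>| L \<longrightarrow> y |\<in>| L \<longrightarrow> x \<noteq> y \<longrightarrow> \<not> game_le x y)
   \<and> (\<forall>x y. x |\<in>| R \<longrightarrow> y |\<in>| R \<longrightarrow> x \<noteq> y \<longrightarrow> \<not> game_le y x)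
   \<and> (\<forall>x z. x |\<in>| L \<longrightarrow> z |\<in>| rights x \<longrightarrow> \<not> game_le z (Game L R))
   \<and> (\<forall>x z. x |\<in>| R \<longrightarrow> z |\<in>| lefts x \<longrightarrow> \<not> game_le (Game L R) z)"
  by pat_completeness auto
termination by (relation "measure size") (simp_all add: size_mem_L size_mem_R)

text \<open>Equivalence modulo domination G \<triangleq> H, read off the sum G + (-H):
  every first move in one summand has a reply in the other summand after which
  the replying player wins (the original mover, now to move, loses).\<close>
definition equiv_dom :: "game \<Rightarrow> game \<Rightarrow> bool" where
  "equiv_dom G H \<longleftrightarrow>
     (\<forall>x. x |\<in>| lefts G \<longrightarrow> (\<exists>y. y |\<in>| rights (neg H) \<and> \<not> wins True (plus x y)))
   \<and> (\<forall>x. x |\<in>| rights G \<longrightarrow> (\<exists>y. y |\<in>| lefts (neg H) \<and> \<not> wins False (plus x y)))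
   \<and> (\<forall>y. y |\<in>| lefts (neg H) \<longrightarrow> (\<exists>x. x |\<in>| rights G \<and> \<not> wins True (plus x y)))
   \<and> (\<forall>y. y |\<in>| rights (neg H) \<longrightarrow> (\<exists>x. x |\<in>| lefts G \<and> \<not> wins False (plus x y)))"

end

theory Submission
  imports Defs
begin

(* All options of G are numbers, and numbers are totally ordered, so G has a greatest Left
   option x and a least Right option y, which dominate all the others; a and b are the canonical
   forms of x and y. A game of least size in its equivalence class is canonical, since deleting a
   dominated option, bypassing a reversible one or replacing an option by a smaller equivalent
   game would shrink it. The canonical form of a number is again a number: as none of its Left
   options is reversible, each of them lies below a Left option of the number, hence below it;
   dually on the Right. *)

lemma neg_neg [simp]: "neg (neg G) = G"
  by (induction G rule: neg.induct) (auto simp: fset.map_ident_strong)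

lemma inj_neg: "inj neg"
  by (metis injI neg_neg)

lemma lefts_neg [simp]: "lefts (neg G) = neg |`| rights G"
  by (cases G) simp

lemma rights_neg [simp]: "rights (neg G) = neg |`| lefts G"
  by (cases G) simp

lemma size_neg [simp]: "size (neg G) = size G"
proof (induction G rule: neg.induct)
  case (1 L R)
  have "(\<Sum>y\<in>fset (neg |`| A). Suc (size y)) = (\<Sum>y\<in>fset A. Suc (size y))"
    if "\<And>x. x |\<in>| A \<Longrightarrow> size (neg x) = size x" for A
    using that by (simp add: sum.reindex inj_on_subset[OF inj_neg])
  then show ?case using 1 by simp
qed

lemma plus_commute: "plus G H = plus H G"
  by (induction G H rule: plus.induct) (auto simp: funion_commute intro!: fimage_cong)

lemma neg_plus: "neg (plus G H) = plus (neg G) (neg H)"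
  by (induction G H rule: plus.induct)
     (simp add: fimage_funion comp_def cong: fimage_cong)

lemma wins_neg: "wins b (neg G) \<longleftrightarrow> wins (\<not> b) G"
proof (induction G arbitrary: b rule: neg.induct)
  case (1 L R)
  then show ?case by (cases b) auto
qed

lemma not_wins_True_plus_neg: "\<not> wins True (plus G (neg H)) \<longleftrightarrow> game_le G H"
proof -
  have "neg (plus G (neg H)) = plus H (neg G)"
    by (simp add: neg_plus plus_commute)
  then show ?thesis
    using wins_neg[of False "plus G (neg H)"] by (simp add: game_le_def)
qed

lemma not_wins_False_plus_neg: "\<not> wins False (plus G (neg H)) \<longleftrightarrow> game_le H G"
  by (simp add: game_le_def)

lemma game_le_neg [simp]: "game_le (neg G) (neg H) \<longleftrightarrow> game_le H G"
  by (simp add: game_le_def plus_commute)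

lemma game_le_iff:
  "game_le G H \<longleftrightarrow>
     (\<forall>x. x |\<in>| lefts G \<longrightarrow> \<not> game_le H x) \<and> (\<forall>y. y |\<in>| rights H \<longrightarrow> \<not> game_le y G)"
proof (cases G, cases H)
  fix L R L' R' assume G: "G = Game L R" and H: "H = Game L' R'"
  have "game_le G H \<longleftrightarrow>
     \<not> ((\<exists>y\<in>fset R'. \<not> wins True (plus y (neg G))) \<or> (\<exists>x\<in>fset L. \<not> wins True (plus H (neg x))))"
    by (simp add: game_le_def G H) (auto simp: G)
  then show ?thesis
    unfolding not_wins_True_plus_neg by (auto simp: G H)
qed

lemma game_le_refl [simp]: "game_le G G"
proof (induction G)
  case (Game L R)
  have "\<not> game_le (Game L R) x" if "x |\<in>| L" for x
    using Game(1)[OF that] that by (subst game_le_iff) auto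
  moreover have "\<not> game_le y (Game L R)" if "y |\<in>| R" for y
    using Game(2)[OF that] that by (subst game_le_iff) auto
  ultimately show ?case
    by (subst game_le_iff) simp
qed

lemma not_le_left_option: "x |\<in>| lefts G \<Longrightarrow> \<not> game_le G x"
  using game_le_refl[of G] by (subst (asm) game_le_iff) auto

lemma not_le_right_option: "y |\<in>| rights G \<Longrightarrow> \<not> game_le y G"
  using game_le_refl[of G] by (subst (asm) game_le_iff) auto

lemma size_lefts: "x |\<in>| lefts G \<Longrightarrow> size x < size G"
  by (cases G) (auto intro: size_mem_L)

lemma size_rights: "y |\<in>| rights G \<Longrightarrow> size y < size G"
  by (cases G) (auto intro: size_mem_R)

lemma game_le_trans: "game_le G H \<Longrightarrow> game_le H K \<Longrightarrow> game_le G K"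
proof (induction "size G + size H + size K" arbitrary: G H K rule: less_induct)
  case less
  show ?case
  proof (subst game_le_iff, intro conjI allI impI notI)
    fix x assume x: "x |\<in>| lefts G" and "game_le K x"
    with less.hyps[of H K x] less.prems(2) size_lefts[OF x] have "game_le H x" by simp
    with less.prems(1) x show False by (auto simp: game_le_iff[of G H])
  next
    fix y assume y: "y |\<in>| rights K" and "game_le y G"
    with less.hyps[of y G H] less.prems(1) size_rights[OF y] have "game_le y H" by simp
    with less.prems(2) y show False by (auto simp: game_le_iff[of H K])
  qed
qed

definition game_equiv :: "game \<Rightarrow> game \<Rightarrow> bool" where
  "game_equiv G H \<longleftrightarrow> game_le G H \<and> game_le H G"

lemma game_equiv_refl [simp]: "game_equiv G G"
  by (simp add: game_equiv_def)

lemma game_equiv_trans: "game_equiv G H \<Longrightarrow> game_equiv H K \<Longrightarrow> game_equiv G K"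
  unfolding game_equiv_def using game_le_trans by blast

lemma game_equiv_neg_iff: "game_equiv (neg G) H \<longleftrightarrow> game_equiv G (neg H)"
  by (metis game_equiv_def game_le_neg neg_neg)

lemma game_le_GameI:
  assumes "\<And>x. x |\<in>| L \<Longrightarrow> \<exists>x'. x' |\<in>| L' \<and> game_le x x'"
      and "\<And>y'. y' |\<in>| R' \<Longrightarrow> \<exists>y. y |\<in>| R \<and> game_le y y'"
  shows "game_le (Game L R) (Game L' R')"
proof (subst game_le_iff, intro conjI allI impI notI)
  fix x assume "x |\<in>| lefts (Game L R)" and le: "game_le (Game L' R') x"
  then obtain x' where "x' |\<in>| L'" "game_le x x'" using assms(1) by auto
  then show False using game_le_trans[OF le] not_le_left_option[of x' "Game L' R'"] by auto
next
  fix y' assume "y' |\<in>| rights (Game L' R')" and le: "game_le y' (Game L R)"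
  then obtain y where "y |\<in>| R" "game_le y y'" using assms(2) by auto
  then show False using game_le_trans[OF _ le] not_le_right_option[of y "Game L R"] by auto
qed

lemma game_equiv_bypass_reversible_left:
  assumes x: "x |\<in>| L" and z: "z |\<in>| rights x" and z_le: "game_le z (Game L R)"
  shows "game_equiv (Game (L |-| {|x|} |\<union>| lefts z) R) (Game L R)"
proof -
  let ?G = "Game L R" and ?G' = "Game (L |-| {|x|} |\<union>| lefts z) R"
  have z_le': "game_le z ?G'"
  proof (subst game_le_iff, intro conjI allI impI)
    fix w assume "w |\<in>| lefts z"
    then show "\<not> game_le ?G' w" using not_le_left_option[of w ?G'] by simp
  next
    fix y assume "y |\<in>| rights ?G'"
    then show "\<not> game_le y z" using z_le game_le_trans not_le_right_option[of y ?G] by auto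
  qed
  have "game_le ?G' ?G"
  proof (subst game_le_iff, intro conjI allI impI notI)
    fix w assume w: "w |\<in>| lefts ?G'" and le: "game_le ?G w"
    then have "w |\<in>| L \<or> w |\<in>| lefts z" by auto
    then show False
      using not_le_left_option[of w ?G] not_le_left_option[of w z] game_le_trans[OF z_le le] le
      by auto
  next
    fix y assume "y |\<in>| rights ?G" "game_le y ?G'"
    then show False using not_le_right_option[of y ?G'] by simp
  qed
  moreover have "game_le ?G ?G'"
  proof (subst game_le_iff, intro conjI allI impI notI)
    fix w assume w: "w |\<in>| lefts ?G" and le: "game_le ?G' w"
    show False
    proof (cases "w = x")
      case True
      with le z have "\<not> game_le z ?G'" by (auto simp: game_le_iff[of ?G' x])
      with z_le' show False by contradiction
    next
      case False
      with w le show False using not_le_left_option[of w ?G'] by simp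
    qed
  next
    fix y assume "y |\<in>| rights ?G'" "game_le y ?G"
    then show False using not_le_right_option[of y ?G] by simp
  qed
  ultimately show ?thesis by (simp add: game_equiv_def)
qed

definition options_size :: "game fset \<Rightarrow> nat" where
  "options_size A = (\<Sum>y\<in>fset A. Suc (size y))"

lemma size_Game: "size (Game L R) = Suc (options_size L + options_size R)"
  by (simp add: options_size_def)

lemma options_size_fminus:
  "x |\<in>| A \<Longrightarrow> options_size A = Suc (size x) + options_size (A |-| {|x|})"
  unfolding options_size_def by (simp add: sum.remove)

lemma options_size_finsert_le: "options_size (finsert y A) \<le> Suc (size y) + options_size A"
  unfolding options_size_def by (simp add: sum.insert_if)

lemma options_size_funion_le: "options_size (A |\<union>| B) \<le> options_size A + options_size B"
  unfolding options_size_def by (simp add: sum_Un_nat)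

lemma options_size_lefts_less: "options_size (lefts G) < size G"
  by (cases G) (simp add: options_size_def)

definition size_minimal :: "game \<Rightarrow> bool" where
  "size_minimal G \<longleftrightarrow> (\<forall>H. game_equiv H G \<longrightarrow> size G \<le> size H)"

lemma size_minimalD: "size_minimal G \<Longrightarrow> game_equiv H G \<Longrightarrow> size G \<le> size H"
  by (simp add: size_minimal_def)

lemma ex_size_minimal_equiv: "\<exists>K. size_minimal K \<and> game_equiv K G"
proof -
  obtain K where K: "game_equiv K G" and least: "\<And>H. game_equiv H G \<Longrightarrow> size K \<le> size H"
    using ex_has_least_nat[of "\<lambda>K. game_equiv K G" G size] by auto
  have "size_minimal K"
    unfolding size_minimal_def using K least game_equiv_trans by blast
  with K show ?thesis by blast
qed

lemma size_minimal_neg: "size_minimal G \<Longrightarrow> size_minimal (neg G)"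
  unfolding size_minimal_def by (metis game_equiv_neg_iff size_neg)

lemma size_minimal_left_option:
  assumes min: "size_minimal (Game L R)" and x: "x |\<in>| L"
  shows "size_minimal x"
  unfolding size_minimal_def
proof (intro allI impI)
  fix x' assume x': "game_equiv x' x"
  let ?G' = "Game (finsert x' (L |-| {|x|})) R"
  have "\<exists>w'. w' |\<in>| L \<and> game_le w w'" if "w |\<in>| finsert x' (L |-| {|x|})" for w
    using that x x' by (auto simp: game_equiv_def)
  moreover have "\<exists>w'. w' |\<in>| finsert x' (L |-| {|x|}) \<and> game_le w w'" if "w |\<in>| L" for w
    using that x' by (cases "w = x") (auto simp: game_equiv_def)
  ultimately have "game_equiv ?G' (Game L R)"
    unfolding game_equiv_def by (auto intro!: game_le_GameI)
  then have "size (Game L R) \<le> size ?G'" by (rule size_minimalD[OF min])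
  then show "size x \<le> size x'"
    using options_size_finsert_le[of x' "L |-| {|x|}"] options_size_fminus[OF x]
    by (simp only: size_Game; linarith)
qed

lemma size_minimal_no_dominated_left:
  assumes min: "size_minimal (Game L R)" and "x |\<in>| L" "y |\<in>| L" "x \<noteq> y"
  shows "\<not> game_le x y"
proof
  assume "game_le x y"
  let ?G' = "Game (L |-| {|x|}) R"
  have "\<exists>w'. w' |\<in>| L |-| {|x|} \<and> game_le w w'" if "w |\<in>| L" for w
    using assms \<open>game_le x y\<close> that by (cases "w = x") auto
  then have "game_equiv ?G' (Game L R)"
    unfolding game_equiv_def by (auto intro!: game_le_GameI)
  then have "size (Game L R) \<le> size ?G'" by (rule size_minimalD[OF min])
  then show False
    using options_size_fminus[OF \<open>x |\<in>| L\<close>] by (simp only: size_Game; linarith)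
qed

lemma size_minimal_no_reversible_left:
  assumes min: "size_minimal (Game L R)" and x: "x |\<in>| L" and z: "z |\<in>| rights x"
  shows "\<not> game_le z (Game L R)"
proof
  assume "game_le z (Game L R)"
  let ?G' = "Game (L |-| {|x|} |\<union>| lefts z) R"
  have "game_equiv ?G' (Game L R)"
    using game_equiv_bypass_reversible_left[OF x z \<open>game_le z (Game L R)\<close>] .
  then have "size (Game L R) \<le> size ?G'" by (rule size_minimalD[OF min])
  moreover have "options_size (lefts z) < size x"
    using options_size_lefts_less[of z] size_rights[OF z] by simp
  ultimately show False
    using options_size_funion_le[of "L |-| {|x|}" "lefts z"] options_size_fminus[OF x]
    by (simp only: size_Game; linarith)
qed

lemma size_minimal_neg_Game:
  "size_minimal (Game L R) \<Longrightarrow> size_minimal (Game (neg |`| R) (neg |`| L))"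
  using size_minimal_neg[of "Game L R"] by (simp only: neg.simps)

lemma size_minimal_right_option:
  assumes "size_minimal (Game L R)" and "y |\<in>| R"
  shows "size_minimal y"
proof -
  have "size_minimal (neg y)"
    using size_minimal_left_option[OF size_minimal_neg_Game[OF assms(1)]] assms(2) by simp
  then show ?thesis using size_minimal_neg by fastforce
qed

lemma size_minimal_no_dominated_right:
  assumes "size_minimal (Game L R)" and "x |\<in>| R" "y |\<in>| R" "x \<noteq> y"
  shows "\<not> game_le y x"
proof -
  have "\<not> game_le (neg x) (neg y)"
    by (rule size_minimal_no_dominated_left[OF size_minimal_neg_Game[OF assms(1)]])
       (use assms(2-4) inj_eq[OF inj_neg] in auto)
  then show ?thesis by (metis game_le_neg)
qed

lemma size_minimal_no_reversible_right:
  assumes "size_minimal (Game L R)" and "x |\<in>| R" and "z |\<in>| lefts x"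
  shows "\<not> game_le (Game L R) z"
proof -
  have "\<not> game_le (neg z) (neg (Game L R))"
    unfolding neg.simps
    by (rule size_minimal_no_reversible_left[OF size_minimal_neg_Game[OF assms(1)]])
       (use assms(2,3) in auto)
  then show ?thesis by (metis game_le_neg)
qed

lemma size_minimal_canonical: "size_minimal G \<Longrightarrow> canonical G"
proof (induction G)
  case (Game L R)
  note min = \<open>size_minimal (Game L R)\<close>
  show ?case
    unfolding canonical.simps
  proof (intro conjI allI impI)
    show "canonical x" if "x |\<in>| L" for x
      using Game.IH(1)[OF that] size_minimal_left_option[OF min that] .
    show "canonical y" if "y |\<in>| R" for y
      using Game.IH(2)[OF that] size_minimal_right_option[OF min that] .
  qed (use size_minimal_no_dominated_left[OF min] size_minimal_no_dominated_right[OF min]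
         size_minimal_no_reversible_left[OF min] size_minimal_no_reversible_right[OF min] in auto)
qed

lemma ex_canonical_equiv: "\<exists>K. canonical K \<and> game_equiv K G"
  using ex_size_minimal_equiv size_minimal_canonical by blast

lemma game_lt_neg [simp]: "game_lt (neg G) (neg H) \<longleftrightarrow> game_lt H G"
  by (simp add: game_lt_def)

lemma is_number_neg: "is_number G \<Longrightarrow> is_number (neg G)"
  unfolding is_number_def by auto

lemma number_le_total:
  assumes "is_number x" and "is_number y"
  shows "game_le x y \<or> game_le y x"
proof (rule disjCI)
  assume "\<not> game_le y x"
  then obtain w where "w |\<in>| lefts y \<and> game_le x w \<or> w |\<in>| rights x \<and> game_le w y"
    using game_le_iff[of y x] by blast
  then show "game_le x y"
    using assms game_le_trans unfolding is_number_def game_lt_def by blast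
qed

lemma finite_total_trans_has_greatest:
  assumes "finite S" and "S \<noteq> {}"
      and total: "\<And>x y. x \<in> S \<Longrightarrow> y \<in> S \<Longrightarrow> r x y \<or> r y x"
      and trans: "\<And>x y z. r x y \<Longrightarrow> r y z \<Longrightarrow> r x z"
  shows "\<exists>m\<in>S. \<forall>x\<in>S. r x m"
  using assms(1,2) total
proof (induction S rule: finite_ne_induct)
  case (singleton x)
  then show ?case by blast
next
  case (insert x S)
  then obtain m where "m \<in> S" "\<forall>y\<in>S. r y m" by blast
  with insert.prems trans show ?case by (cases "r x m") blast+
qed

lemma left_option_lt_if_equiv_number:
  assumes no_reversible: "\<And>k z. k |\<in>| lefts K \<Longrightarrow> z |\<in>| rights k \<Longrightarrow> \<not> game_le z K"
      and "game_equiv K x" and "is_number x" and k: "k |\<in>| lefts K"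
  shows "game_lt k K"
proof -
  have K_le: "game_le K x" and le_K: "game_le x K"
    using \<open>game_equiv K x\<close> by (auto simp: game_equiv_def)
  have "\<not> game_le x k"
    using K_le k by (auto simp: game_le_iff[of K x])
  then obtain w where "w |\<in>| lefts x \<and> game_le k w \<or> w |\<in>| rights k \<and> game_le w x"
    using game_le_iff[of x k] by blast
  then have "game_le k K"
    using \<open>is_number x\<close> le_K no_reversible[OF k] game_le_trans
    unfolding is_number_def game_lt_def by blast
  then show ?thesis using not_le_left_option[OF k] by (simp add: game_lt_def)
qed

lemma canonical_equiv_number_is_number:
  assumes "canonical K" and "game_equiv K x" and "is_number x"
  shows "is_number K"
proof -
  have no_rev_left: "\<And>k z. k |\<in>| lefts K \<Longrightarrow> z |\<in>| rights k \<Longrightarrow> \<not> game_le z K"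
   and no_rev_right: "\<And>k z. k |\<in>| rights K \<Longrightarrow> z |\<in>| lefts k \<Longrightarrow> \<not> game_le K z"
    using \<open>canonical K\<close> by (cases K; simp)+
  have "game_lt k K" if "k |\<in>| lefts K" for k
    using left_option_lt_if_equiv_number[OF no_rev_left assms(2,3) that] .
  moreover have "game_lt K k" if "k |\<in>| rights K" for k
  proof -
    have "game_lt (neg k) (neg K)"
      by (rule left_option_lt_if_equiv_number[of _ "neg x"])
         (use no_rev_right \<open>game_equiv K x\<close> is_number_neg[OF \<open>is_number x\<close>] that
          in \<open>auto simp: game_equiv_def\<close>)
    then show ?thesis by simp
  qed
  ultimately show ?thesis unfolding is_number_def by blast
qed

lemma equiv_dom_Game_single_iff:
  "equiv_dom G (Game {|a|} {|b|}) \<longleftrightarrow>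
     (\<forall>x. x |\<in>| lefts G \<longrightarrow> game_le x a) \<and> (\<exists>x. x |\<in>| lefts G \<and> game_le a x) \<and>
     (\<forall>y. y |\<in>| rights G \<longrightarrow> game_le b y) \<and> (\<exists>y. y |\<in>| rights G \<and> game_le y b)"
  unfolding equiv_dom_def by (auto simp: not_wins_True_plus_neg not_wins_False_plus_neg)

theorem proposition2p8:
  fixes G :: game
  assumes "\<forall>x. x |\<in>| lefts G \<longrightarrow> is_number x"
      and "\<forall>x. x |\<in>| rights G \<longrightarrow> is_number x"
      and "lefts G \<noteq> {||}"
      and "rights G \<noteq> {||}"
  shows "\<exists>a b. is_number a \<and> canonical a \<and> is_number b \<and> canonical b
               \<and> equiv_dom G (Game {|a|} {|b|})"
proof -
  have "\<exists>x\<in>fset (lefts G). \<forall>x'\<in>fset (lefts G). game_le x' x"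
    by (rule finite_total_trans_has_greatest)
       (use assms(1,3) number_le_total game_le_trans in auto)
  then obtain x where x: "x |\<in>| lefts G" and x_max: "\<And>x'. x' |\<in>| lefts G \<Longrightarrow> game_le x' x"
    by blast
  have "\<exists>y\<in>fset (rights G). \<forall>y'\<in>fset (rights G). game_le y y'"
    by (rule finite_total_trans_has_greatest[where r = "\<lambda>u v. game_le v u"])
       (use assms(2,4) number_le_total game_le_trans in auto)
  then obtain y where y: "y |\<in>| rights G" and y_min: "\<And>y'. y' |\<in>| rights G \<Longrightarrow> game_le y y'"
    by blast
  obtain a where a: "canonical a" "game_equiv a x" using ex_canonical_equiv by blast
  obtain b where b: "canonical b" "game_equiv b y" using ex_canonical_equiv by blast
  have "is_number a" "is_number b"
    using canonical_equiv_number_is_number a b x y assms(1,2) by blast+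
  moreover have "equiv_dom G (Game {|a|} {|b|})"
    unfolding equiv_dom_Game_single_iff
    using x x_max y y_min a(2) b(2) game_le_trans unfolding game_equiv_def by blast
  ultimately show ?thesis using a(1) b(1) by blast
qed

end
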